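(* For every $x>0$, $$\left(\frac{\sqrt{x}+1}{2}\right)^2\ge S(\sqrt{x})\,\sqrt{x},$$ where $S$ is the Specht ratio.
   Context: The Specht ratio is $S(x)=\dfrac{x^{\frac{1}{x-1}}}{e\log x^{\frac{1}{x-1}}}$ for $x>0$, $x\neq 1$, and $S(1)=1$. *)

theory Defs
  imports Complex_Main
begin

definition specht_ratio :: "real \<Rightarrow> real" where
  "specht_ratio x =
     (if x = 1 then 1
      else (x powr (1 / (x - 1))) / (exp 1 * ln (x powr (1 / (x - 1)))))"

end

theory Submission
  imports Defs
begin

text \<open>For \<open>t > 0\<close>, \<open>t \<noteq> 1\<close> one has \<open>S(t) t = L(1,t) I(1,t)\<close>, the product of the logarithmic
  and the identric mean of \<open>1\<close> and \<open>t\<close>. Both means are bounded by the arithmetic mean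
  \<open>(1 + t)/2\<close>; each bound is the sign of a function that is nondecreasing on \<open>(0,\<infinity>)\<close>
  and vanishes at \<open>1\<close>. Applied to \<open>t = \<surd>x\<close> this is the claim.\<close>

definition logarithmic_mean :: "real \<Rightarrow> real \<Rightarrow> real" where
  "logarithmic_mean a b = (b - a) / (ln b - ln a)"

text \<open>\<open>I(a,b) = (b^b / a^a)^(1/(b - a)) / e\<close>, written through its logarithm.\<close>
definition identric_mean :: "real \<Rightarrow> real \<Rightarrow> real" where
  "identric_mean a b = exp ((b * ln b - a * ln a) / (b - a) - 1)"

lemma mult_sign_if_nondecreasing_vanishing_at_1:
  fixes f f' :: "real \<Rightarrow> real"
  assumes deriv: "\<And>s. s > 0 \<Longrightarrow> (f has_real_derivative f' s) (at s)"
    and nonneg: "\<And>s. s > 0 \<Longrightarrow> f' s \<ge> 0"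
    and "f 1 = 0" and "t > 0"
  shows "(t - 1) * f t \<ge> 0"
proof -
  have mono: "f a \<le> f b" if "0 < a" "a \<le> b" for a b
    using that(2) by (rule DERIV_nonneg_imp_nondecreasing)
      (use that deriv nonneg in \<open>meson less_le_trans\<close>)
  show ?thesis
  proof (cases "t \<ge> 1")
    case True
    with mono[of 1 t] \<open>f 1 = 0\<close> show ?thesis by simp
  next
    case False
    with mono[of t 1] \<open>t > 0\<close> \<open>f 1 = 0\<close> show ?thesis by (simp add: mult_nonpos_nonpos)
  qed
qed

lemma ln_sub_two_ratio_sign:
  fixes t :: real
  assumes "t > 0"
  shows "(t - 1) * (ln t - 2 * (t - 1) / (t + 1)) \<ge> 0"
proof (rule mult_sign_if_nondecreasing_vanishing_at_1[OF _ _ _ assms])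
  fix s :: real
  assume s: "s > 0"
  show "((\<lambda>t. ln t - 2 * (t - 1) / (t + 1)) has_real_derivative 1 / s - 4 / (s + 1)\<^sup>2) (at s)"
    using s by (auto intro!: derivative_eq_intros simp: power2_eq_square field_simps)
  have "s + 1 > 0"
    using s by simp
  then have "1 / s - 4 / (s + 1)\<^sup>2 = (s - 1)\<^sup>2 / (s * (s + 1)\<^sup>2)"
    using s by (simp add: divide_simps) (simp add: power2_eq_square algebra_simps)
  then show "1 / s - 4 / (s + 1)\<^sup>2 \<ge> 0"
    using s by simp
qed simp

lemma logarithmic_mean_le_arith_mean:
  fixes t :: real
  assumes "t > 0" "t \<noteq> 1"
  shows "logarithmic_mean 1 t \<le> (1 + t) / 2"
proof -
  have pos: "(t - 1) * ln t > 0"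
    using assms by (auto simp: zero_less_mult_iff linorder_neq_iff)
  have lower: "2 * (t - 1)\<^sup>2 / (t + 1) \<le> (t - 1) * ln t"
    using ln_sub_two_ratio_sign[OF \<open>t > 0\<close>] by (simp add: right_diff_distrib power2_eq_square mult_ac)
  have lower_pos: "2 * (t - 1)\<^sup>2 / (t + 1) > 0"
    using assms by simp
  have "logarithmic_mean 1 t = (t - 1)\<^sup>2 / ((t - 1) * ln t)"
    using assms by (simp add: logarithmic_mean_def power2_eq_square)
  also have "\<dots> \<le> (t - 1)\<^sup>2 / (2 * (t - 1)\<^sup>2 / (t + 1))"
    by (rule divide_left_mono[OF lower _ mult_pos_pos[OF pos lower_pos]]) simp
  also have "\<dots> = (1 + t) / 2"
    using assms by (simp add: power2_eq_square)
  finally show ?thesis .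
qed

lemma ln_arith_mean_sub_ln_identric_sign:
  fixes t :: real
  assumes "t > 0"
  shows "(t - 1) * ((t - 1) * ln ((1 + t) / 2) - t * ln t + (t - 1)) \<ge> 0"
proof (rule mult_sign_if_nondecreasing_vanishing_at_1[OF _ _ _ assms])
  fix s :: real
  assume s: "s > 0"
  show "((\<lambda>t. (t - 1) * ln ((1 + t) / 2) - t * ln t + (t - 1)) has_real_derivative
          (s - 1) / (1 + s) + ln ((1 + s) / 2) - ln s) (at s)"
    by (insert s, (rule derivative_eq_intros refl | simp)+, simp add: divide_simps algebra_simps)
  have "ln s - ln ((1 + s) / 2) = ln (2 * s / (1 + s))"
    using s by (simp add: ln_div ln_mult)
  also have "\<dots> \<le> 2 * s / (1 + s) - 1"
    using s by (intro ln_le_minus_one) simp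
  also have "\<dots> = (s - 1) / (1 + s)"
    using s by (simp add: field_simps)
  finally show "(s - 1) / (1 + s) + ln ((1 + s) / 2) - ln s \<ge> 0"
    by simp
qed simp

lemma identric_mean_le_arith_mean:
  fixes t :: real
  assumes "t > 0" "t \<noteq> 1"
  shows "identric_mean 1 t \<le> (1 + t) / 2"
proof -
  have sign: "(t - 1) * (t * ln t - (t - 1)) \<le> (t - 1)\<^sup>2 * ln ((1 + t) / 2)"
    using ln_arith_mean_sub_ln_identric_sign[OF \<open>t > 0\<close>] by (simp add: algebra_simps power2_eq_square)
  have "t * ln t / (t - 1) - 1 = (t - 1) * (t * ln t - (t - 1)) / (t - 1)\<^sup>2"
    using assms by (simp add: power2_eq_square diff_divide_distrib)
  also have "\<dots> \<le> ln ((1 + t) / 2)"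
    using sign assms by (simp add: divide_le_eq mult.commute)
  finally have "t * ln t / (t - 1) - 1 \<le> ln ((1 + t) / 2)" .
  then have "exp (t * ln t / (t - 1) - 1) \<le> (1 + t) / 2"
    using \<open>t > 0\<close> by (simp add: ln_ge_iff)
  then show ?thesis
    by (simp add: identric_mean_def)
qed

lemma specht_ratio_mult_eq_log_mean_mult_identric_mean:
  fixes t :: real
  assumes "t > 0" "t \<noteq> 1"
  shows "specht_ratio t * t = logarithmic_mean 1 t * identric_mean 1 t"
proof -
  have "t * ln t / (t - 1) = ln t + ln t / (t - 1)"
    using assms by (simp add: field_simps)
  then have identric: "identric_mean 1 t = t * t powr (1 / (t - 1)) / exp 1"
    using assms by (simp add: identric_mean_def powr_def exp_add exp_diff)
  have specht: "specht_ratio t = t powr (1 / (t - 1)) / (exp 1 * (ln t / (t - 1)))"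
    using assms by (simp add: specht_ratio_def ln_powr)
  show ?thesis
    unfolding identric specht logarithmic_mean_def using assms by (simp add: field_simps)
qed

lemma specht_ratio_mult_le_arith_mean_sq:
  fixes t :: real
  assumes "t > 0"
  shows "specht_ratio t * t \<le> ((t + 1) / 2) ^ 2"
proof (cases "t = 1")
  case True
  then show ?thesis by (simp add: specht_ratio_def)
next
  case False
  have "logarithmic_mean 1 t > 0"
    using assms False by (cases "t < 1") (auto simp: logarithmic_mean_def divide_neg_neg)
  then have "logarithmic_mean 1 t * identric_mean 1 t \<le> ((1 + t) / 2) * ((1 + t) / 2)"
    using logarithmic_mean_le_arith_mean[OF assms False]
      identric_mean_le_arith_mean[OF assms False]
    by (intro mult_mono) (auto simp: identric_mean_def)
  then show ?thesis
    using specht_ratio_mult_eq_log_mean_mult_identric_mean[OF assms False]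
    by (simp add: power2_eq_square add.commute)
qed

theorem proposition2p2:
  fixes x :: real
  assumes "x > 0"
  shows "((sqrt x + 1) / 2) ^ 2 \<ge> specht_ratio (sqrt x) * sqrt x"
  using specht_ratio_mult_le_arith_mean_sq assms by simp

end
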